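(* Let $A\subset\mathbb{R}^n$ and let $w\in\mathbb{R}^n$ be such that $0\notin\overline A$ and $w\notin\overline A$. Let $\Phi(x)=\frac{x}{|x|^2}$ be the geometric inversion with respect to the origin and $\Psi(x)=\frac{x-w}{|x-w|^2}$ the geometric inversion with respect to the point $w$. Then $f=\Psi\circ\Phi:\Phi(A)\to\Psi(A)$ is a bi-Lipschitz mapping. In particular, $\overline{\dim}_B\Phi(A)=\overline{\dim}_B\Psi(A)$ and $\underline{\dim}_B\Phi(A)=\underline{\dim}_B\Psi(A)$.
   Context: $|\cdot|$ denotes the Euclidean norm. A map $f$ is bi-Lipschitz if there are constants $c_1,c_2>0$ with $c_1|a-b|\le|f(a)-f(b)|\le c_2|a-b|$ for all $a,b$ in its domain. For a nonempty bounded set $B\subset\mathbb{R}^n$, with $B_\varepsilon$ its Euclidean $\varepsilon$-neighbourhood and $|B_\varepsilon|$ its $n$-dimensional Lebesgue measure, the upper (resp. lower) $s$-dimensional Minkowski content is $\mathcal M^{*s}(B)=\limsup_{\varepsilon\to0}|B_\varepsilon|/\varepsilon^{n-s}$ (resp. $\mathcal M_*^s(B)$ with $\liminf$), and the upper (resp. lower) box dimension is $\overline{\dim}_BB=\inf\{s\ge0:\mathcal M^{*s}(B)=0\}$ (resp. $\underline{\dim}_BB=\inf\{s\ge0:\mathcal M_*^{s}(B)=0\}$). *)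

theory Defs
  imports "HOL-Analysis.Analysis"
begin

definition inversion :: "'a::euclidean_space \<Rightarrow> 'a \<Rightarrow> 'a" where
  "inversion w x = (1 / (norm (x - w))\<^sup>2) *\<^sub>R (x - w)"

definition bi_lipschitz_on :: "'a::metric_space set \<Rightarrow> ('a \<Rightarrow> 'b::metric_space) \<Rightarrow> bool" where
  "bi_lipschitz_on S f \<longleftrightarrow> (\<exists>c1 c2. c1 > 0 \<and> c2 > 0 \<and>
     (\<forall>a\<in>S. \<forall>b\<in>S. c1 * dist a b \<le> dist (f a) (f b) \<and> dist (f a) (f b) \<le> c2 * dist a b))"

definition eps_nbhd :: "'a::euclidean_space set \<Rightarrow> real \<Rightarrow> 'a set" where
  "eps_nbhd B \<epsilon> = (\<Union>b\<in>B. ball b \<epsilon>)"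

definition upper_minkowski_content :: "real \<Rightarrow> 'a::euclidean_space set \<Rightarrow> ereal" where
  "upper_minkowski_content s B =
     Limsup (at_right 0) (\<lambda>\<epsilon>. enn2ereal (emeasure lborel (eps_nbhd B \<epsilon>)) / ereal (\<epsilon> powr (real DIM('a) - s)))"

definition lower_minkowski_content :: "real \<Rightarrow> 'a::euclidean_space set \<Rightarrow> ereal" where
  "lower_minkowski_content s B =
     Liminf (at_right 0) (\<lambda>\<epsilon>. enn2ereal (emeasure lborel (eps_nbhd B \<epsilon>)) / ereal (\<epsilon> powr (real DIM('a) - s)))"

definition upper_box_dim :: "'a::euclidean_space set \<Rightarrow> real" where
  "upper_box_dim B = Inf {s. s \<ge> 0 \<and> upper_minkowski_content s B = 0}"

definition lower_box_dim :: "'a::euclidean_space set \<Rightarrow> real" where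
  "lower_box_dim B = Inf {s. s \<ge> 0 \<and> lower_minkowski_content s B = 0}"

end

theory Submission
  imports Defs
begin

text \<open>On \<open>A\<close> the inversions satisfy \<open>|\<Phi> x - \<Phi> y| = |x - y| / (|x| |y|)\<close> and
  \<open>|\<Psi> x - \<Psi> y| = |x - y| / (|x - w| |y - w|)\<close>. As \<open>A\<close> keeps away from both \<open>0\<close> and \<open>w\<close>, the
  factors \<open>|x|\<close> and \<open>|x - w|\<close> are comparable, so \<open>\<Phi> x \<mapsto> \<Psi> x\<close> is bi-Lipschitz.
  For an \<open>L\<close>-Lipschitz image \<open>C = g B\<close> in \<open>\<real>\<^sup>n\<close>, take a maximal \<open>\<epsilon>\<close>-separated subset of \<open>C\<close>: the
  \<open>2\<epsilon>\<close>-balls about it cover \<open>C\<^sub>\<epsilon>\<close>, while the \<open>\<epsilon>/2L\<close>-balls about preimages of its points are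
  disjoint and lie in \<open>B\<^sub>\<epsilon>\<^sub>/\<^sub>2\<^sub>L\<close>, whence \<open>|C\<^sub>\<epsilon>| \<le> (4L)\<^sup>n |B\<^sub>\<epsilon>\<^sub>/\<^sub>2\<^sub>L|\<close>. So bi-Lipschitz maps
  preserve the vanishing of Minkowski contents, hence the box dimensions.\<close>

lemma norm_inversion: "norm (inversion w x) = 1 / norm (x - w)"
  unfolding inversion_def by (simp add: power2_eq_square divide_simps)

text \<open>This holds at \<open>x = 0\<close> too: there \<open>inversion 0 0 = 0\<close>, since \<open>1 / 0 = 0\<close>.\<close>
lemma inversion_0_inversion_0 [simp]: "inversion 0 (inversion 0 x) = x"
proof (cases "x = 0")
  case False
  then have "norm (inversion 0 x) = 1 / norm x"
    by (simp add: norm_inversion)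
  with False show ?thesis
    unfolding inversion_def by (simp add: power2_eq_square)
qed (simp add: inversion_def)

lemma dist_inversion:
  assumes "x \<noteq> w" "y \<noteq> w"
  shows "dist (inversion w x) (inversion w y) = dist x y / (norm (x - w) * norm (y - w))"
proof -
  define u v where "u = x - w" and "v = y - w"
  have u: "norm u > 0" and v: "norm v > 0"
    using assms by (auto simp: u_def v_def)
  have uv: "inner u v = ((norm u)\<^sup>2 + (norm v)\<^sup>2 - (norm (u - v))\<^sup>2) / 2"
    by (rule dot_norm_neg)
  have "(norm ((1 / (norm u)\<^sup>2) *\<^sub>R u - (1 / (norm v)\<^sup>2) *\<^sub>R v))\<^sup>2
      = 1 / (norm u)\<^sup>2 - 2 * inner u v / ((norm u)\<^sup>2 * (norm v)\<^sup>2) + 1 / (norm v)\<^sup>2"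
    using u v by (simp add: power2_norm_eq_inner inner_diff_left inner_diff_right
        inner_commute[of v u] field_simps)
  also have "\<dots> = (norm (u - v) / (norm u * norm v))\<^sup>2"
    unfolding uv using u v by (simp add: field_simps power2_eq_square)
  finally have "norm ((1 / (norm u)\<^sup>2) *\<^sub>R u - (1 / (norm v)\<^sup>2) *\<^sub>R v) = norm (u - v) / (norm u * norm v)"
    using u v by (simp add: power2_eq_iff_nonneg)
  then show ?thesis
    by (simp add: inversion_def dist_norm u_def v_def)
qed

lemma norm_diff_le_rescaled:
  assumes "0 < d" "d \<le> norm (x - w)"
  shows "norm (x - v) \<le> (1 + dist v w / d) * norm (x - w)"
proof -
  have "norm (x - v) \<le> norm (x - w) + dist v w"
    by (metis dist_norm dist_triangle2 norm_minus_commute)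
  also have "dist v w \<le> dist v w / d * norm (x - w)"
    using assms by (simp add: divide_simps mult_left_mono)
  finally show ?thesis
    by (simp add: algebra_simps)
qed

lemma dist_inversion_le_change_centre:
  assumes "x \<noteq> v" "y \<noteq> v" "x \<noteq> w" "y \<noteq> w"
    and "norm (x - v) \<le> K * norm (x - w)" "norm (y - v) \<le> K * norm (y - w)"
  shows "dist (inversion w x) (inversion w y) \<le> K\<^sup>2 * dist (inversion v x) (inversion v y)"
proof -
  have pos: "norm (x - v) > 0" "norm (y - v) > 0" "norm (x - w) > 0" "norm (y - w) > 0"
    using assms(1-4) by auto
  have "0 < K * norm (x - w)"
    using assms(5) pos(1) by linarith
  then have "K > 0"
    using pos(3) by (rule zero_less_mult_pos2)
  have prod_le: "norm (x - v) * norm (y - v) \<le> K\<^sup>2 * (norm (x - w) * norm (y - w))"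
    using mult_mono[OF assms(5,6)] pos \<open>K > 0\<close> by (simp add: power2_eq_square mult_ac)
  have "dist (inversion w x) (inversion w y) = K\<^sup>2 * dist x y / (K\<^sup>2 * (norm (x - w) * norm (y - w)))"
    using assms(3,4) \<open>K > 0\<close> by (simp add: dist_inversion)
  also have "\<dots> \<le> K\<^sup>2 * dist x y / (norm (x - v) * norm (y - v))"
    using prod_le pos \<open>K > 0\<close> by (intro divide_left_mono) auto
  also have "\<dots> = K\<^sup>2 * dist (inversion v x) (inversion v y)"
    using assms(1,2) by (simp add: dist_inversion)
  finally show ?thesis .
qed

lemma bi_lipschitz_on_inversion_change_centre:
  assumes "d > 0" and away: "\<And>x. x \<in> A \<Longrightarrow> d \<le> norm x \<and> d \<le> norm (x - w)"
  shows "bi_lipschitz_on (inversion 0 ` A) (inversion w \<circ> inversion 0)"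
proof -
  define K where "K = 1 + norm w / d"
  have "K > 0"
    using \<open>d > 0\<close> by (simp add: K_def add_pos_nonneg)
  have ne: "x \<noteq> 0" "x \<noteq> w" if "x \<in> A" for x
    using away[OF that] \<open>d > 0\<close> by auto
  have w0: "norm (x - w) \<le> K * norm x" and w1: "norm x \<le> K * norm (x - w)" if "x \<in> A" for x
    using norm_diff_le_rescaled[of d x 0 w] norm_diff_le_rescaled[of d x w 0] away[OF that] \<open>d > 0\<close>
    by (simp_all add: K_def dist_commute)
  have "1 / K\<^sup>2 * dist a b \<le> dist ((inversion w \<circ> inversion 0) a) ((inversion w \<circ> inversion 0) b)
      \<and> dist ((inversion w \<circ> inversion 0) a) ((inversion w \<circ> inversion 0) b) \<le> K\<^sup>2 * dist a b"
    if ab: "a \<in> inversion 0 ` A" "b \<in> inversion 0 ` A" for a b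
  proof -
    obtain x y where xy: "x \<in> A" "y \<in> A" "a = inversion 0 x" "b = inversion 0 y"
      using ab by blast
    have "dist a b \<le> K\<^sup>2 * dist (inversion w x) (inversion w y)"
      unfolding xy(3,4) using xy ne w0 by (intro dist_inversion_le_change_centre) auto
    moreover have "dist (inversion w x) (inversion w y) \<le> K\<^sup>2 * dist a b"
      unfolding xy(3,4) using xy ne w1 by (intro dist_inversion_le_change_centre) auto
    ultimately show ?thesis
      using xy \<open>K > 0\<close> by (simp add: field_simps)
  qed
  moreover have "1 / K\<^sup>2 > 0" "K\<^sup>2 > 0"
    using \<open>K > 0\<close> by auto
  ultimately show ?thesis
    unfolding bi_lipschitz_on_def by blast
qed

lemma card_separated_le_card_cover:
  fixes P :: "'a::metric_space set"
  assumes "finite T" "P \<subseteq> (\<Union>c\<in>T. ball c (e/2))"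
    and sep: "\<And>p q. p \<in> P \<Longrightarrow> q \<in> P \<Longrightarrow> p \<noteq> q \<Longrightarrow> e \<le> dist p q"
  shows "card P \<le> card T"
proof -
  have "\<forall>p\<in>P. \<exists>c. c \<in> T \<and> dist c p < e/2"
    using assms(2) by fastforce
  then obtain h where h: "\<And>p. p \<in> P \<Longrightarrow> h p \<in> T \<and> dist (h p) p < e/2"
    using bchoice by metis
  have "inj_on h P"
  proof (rule inj_onI, rule ccontr)
    fix p q assume pq: "p \<in> P" "q \<in> P" "h p = h q" "p \<noteq> q"
    have "dist p q \<le> dist (h p) p + dist (h q) q"
      using dist_triangle3[of p q "h p"] pq(3) by simp
    also have "\<dots> < e"
      using h[OF pq(1)] h[OF pq(2)] by linarith
    finally show False
      using sep[OF pq(1,2,4)] by linarith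
  qed
  moreover have "h ` P \<subseteq> T"
    using h by blast
  ultimately show ?thesis
    using \<open>finite T\<close> by (rule card_inj_on_le)
qed

lemma bounded_separated_net:
  fixes S :: "'a::heine_borel set"
  assumes "bounded S" "e > 0"
  obtains P where "P \<subseteq> S" "finite P" "\<And>p q. p \<in> P \<Longrightarrow> q \<in> P \<Longrightarrow> p \<noteq> q \<Longrightarrow> e \<le> dist p q"
    and "S \<subseteq> (\<Union>p\<in>P. ball p e)"
proof -
  define separated where
    "separated P \<longleftrightarrow> P \<subseteq> S \<and> finite P \<and> (\<forall>p\<in>P. \<forall>q\<in>P. p \<noteq> q \<longrightarrow> e \<le> dist p q)" for P
  have "compact (closure S)"
    using assms(1) by simp
  then obtain T where "finite T" and T: "closure S \<subseteq> (\<Union>c\<in>T. ball c (e/2))"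
    using compact_eq_totally_bounded[THEN iffD1, THEN conjunct2, rule_format, of "closure S" "e/2"]
      \<open>e > 0\<close> by auto
  have card_le: "card P \<le> card T" if "separated P" for P
  proof (rule card_separated_le_card_cover[OF \<open>finite T\<close>])
    show "P \<subseteq> (\<Union>c\<in>T. ball c (e/2))"
      using that T closure_subset[of S] unfolding separated_def by (meson subset_trans)
    show "\<And>p q. p \<in> P \<Longrightarrow> q \<in> P \<Longrightarrow> p \<noteq> q \<Longrightarrow> e \<le> dist p q"
      using that unfolding separated_def by blast
  qed
  have "separated {}"
    unfolding separated_def by simp
  moreover have "\<forall>P. separated P \<longrightarrow> card P < Suc (card T)"
    using card_le by (simp add: less_Suc_eq_le)
  ultimately obtain P where P: "separated P" and P_max: "\<And>Q. separated Q \<Longrightarrow> card Q \<le> card P"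
    using Lattices_Big.ex_has_greatest_nat[of separated "{}" card] by blast
  have "S \<subseteq> (\<Union>p\<in>P. ball p e)"
  proof
    fix a assume "a \<in> S"
    show "a \<in> (\<Union>p\<in>P. ball p e)"
    proof (rule ccontr)
      assume far: "a \<notin> (\<Union>p\<in>P. ball p e)"
      then have "a \<notin> P"
        using \<open>e > 0\<close> by force
      moreover have "separated (insert a P)"
        using P far \<open>a \<in> S\<close> unfolding separated_def by (auto simp: dist_commute not_less)
      ultimately show False
        using P_max[of "insert a P"] P unfolding separated_def by simp
    qed
  qed
  with P show thesis
    using that unfolding separated_def by blast
qed

lemma bounded_lipschitz_image:
  assumes "L-lipschitz_on B f" "bounded B"
  shows "bounded (f ` B)"
proof (cases "B = {}")
  case False
  then obtain b where "b \<in> B"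
    by blast
  moreover obtain r where r: "\<And>x. x \<in> B \<Longrightarrow> dist b x \<le> r"
    using assms(2) bounded_any_center[of B b] by blast
  ultimately have "dist (f b) (f x) \<le> L * r" if "x \<in> B" for x
    using lipschitz_onD[OF assms(1), of b x] r[OF that] lipschitz_on_nonneg[OF assms(1)] that
    by (meson mult_left_mono order_trans)
  then show ?thesis
    unfolding bounded_any_center[of _ "f b"] by blast
qed simp

lemma eps_nbhd_subset_UN_ball:
  assumes "S \<subseteq> (\<Union>p\<in>P. ball p e)"
  shows "eps_nbhd S e \<subseteq> (\<Union>p\<in>P. ball p (2 * e))"
proof
  fix z assume "z \<in> eps_nbhd S e"
  then obtain x where "x \<in> S" "dist x z < e"
    unfolding eps_nbhd_def by auto
  moreover obtain p where "p \<in> P" "dist p x < e"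
    using assms \<open>x \<in> S\<close> by auto
  moreover have "dist p z \<le> dist p x + dist x z"
    by (rule dist_triangle)
  ultimately have "dist p z < 2 * e"
    by linarith
  with \<open>p \<in> P\<close> show "z \<in> (\<Union>p\<in>P. ball p (2 * e))"
    by auto
qed

lemma emeasure_ball_mult_radius:
  fixes x y :: "'a::euclidean_space"
  assumes "c \<ge> 0" "r \<ge> 0"
  shows "emeasure lborel (ball x (c * r)) = ennreal (c ^ DIM('a)) * emeasure lborel (ball y r)"
proof -
  have "emeasure lborel (ball x (c * r)) = ennreal (c ^ DIM('a) * (unit_ball_vol (real DIM('a)) * r ^ DIM('a)))"
    using assms by (simp add: emeasure_ball power_mult_distrib mult.left_commute)
  also have "\<dots> = ennreal (c ^ DIM('a)) * ennreal (unit_ball_vol (real DIM('a)) * r ^ DIM('a))"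
    using assms by (intro ennreal_mult) auto
  finally show ?thesis
    using assms by (simp add: emeasure_ball)
qed

lemma disjoint_family_on_balls_lipschitz_preimages:
  assumes lip: "L-lipschitz_on B f" and "L > 0"
    and g: "\<And>p. p \<in> P \<Longrightarrow> g p \<in> B \<and> f (g p) = p"
    and sep: "\<And>p q. p \<in> P \<Longrightarrow> q \<in> P \<Longrightarrow> p \<noteq> q \<Longrightarrow> e \<le> dist p q"
  shows "disjoint_family_on (\<lambda>p. ball (g p) (e / (2 * L))) P"
  unfolding disjoint_family_on_def
proof (intro ballI impI)
  fix p q assume pq: "p \<in> P" "q \<in> P" "p \<noteq> q"
  let ?r = "e / (2 * L)"
  show "ball (g p) ?r \<inter> ball (g q) ?r = {}"
  proof (rule ccontr)
    assume "ball (g p) ?r \<inter> ball (g q) ?r \<noteq> {}"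
    then obtain z where "dist (g p) z < ?r" "dist (g q) z < ?r"
      by auto
    then have "dist (g p) (g q) < 2 * ?r"
      using dist_triangle3[of "g p" "g q" z] by (simp add: dist_commute)
    have "dist p q = dist (f (g p)) (f (g q))"
      using g pq(1,2) by simp
    also have "\<dots> \<le> L * dist (g p) (g q)"
      using g pq(1,2) by (intro lipschitz_onD[OF lip]) auto
    also have "\<dots> < L * (2 * ?r)"
      using \<open>dist (g p) (g q) < 2 * ?r\<close> \<open>L > 0\<close> by (rule mult_strict_left_mono)
    also have "\<dots> = e"
      using \<open>L > 0\<close> by simp
    finally show False
      using sep[OF pq] by simp
  qed
qed

lemma emeasure_eps_nbhd_lipschitz_image_le:
  fixes f :: "'a::euclidean_space \<Rightarrow> 'a"
  assumes lip: "L-lipschitz_on B f" and "L > 0" "bounded (f ` B)" "e > 0"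
  shows "emeasure lborel (eps_nbhd (f ` B) e)
     \<le> ennreal ((4 * L) ^ DIM('a)) * emeasure lborel (eps_nbhd B (e / (2 * L)))"
proof -
  define r where "r = e / (2 * L)"
  have "r > 0" "2 * e = 4 * L * r"
    using assms by (simp_all add: r_def)
  obtain P where "P \<subseteq> f ` B" "finite P"
    and sep: "\<And>p q. p \<in> P \<Longrightarrow> q \<in> P \<Longrightarrow> p \<noteq> q \<Longrightarrow> e \<le> dist p q"
    and net: "f ` B \<subseteq> (\<Union>p\<in>P. ball p e)"
    using bounded_separated_net[OF assms(3,4)] by blast
  have "\<forall>p\<in>P. \<exists>b. b \<in> B \<and> f b = p"
    using \<open>P \<subseteq> f ` B\<close> by blast
  then obtain g where g: "\<And>p. p \<in> P \<Longrightarrow> g p \<in> B \<and> f (g p) = p"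
    by (metis bchoice)
  have "emeasure lborel (eps_nbhd (f ` B) e) \<le> emeasure lborel (\<Union>p\<in>P. ball p (2 * e))"
    using eps_nbhd_subset_UN_ball[OF net] by (rule emeasure_mono) (auto intro: borel_open)
  also have "\<dots> \<le> (\<Sum>p\<in>P. emeasure lborel (ball p (2 * e)))"
    using \<open>finite P\<close> by (intro emeasure_subadditive_finite) auto
  also have "\<dots> = ennreal ((4 * L) ^ DIM('a)) * (\<Sum>p\<in>P. emeasure lborel (ball (g p) r))"
    unfolding sum_distrib_left \<open>2 * e = 4 * L * r\<close>
    using \<open>L > 0\<close> \<open>r > 0\<close> by (intro sum.cong refl emeasure_ball_mult_radius) auto
  also have "(\<Sum>p\<in>P. emeasure lborel (ball (g p) r)) = emeasure lborel (\<Union>p\<in>P. ball (g p) r)"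
    using disjoint_family_on_balls_lipschitz_preimages[OF lip \<open>L > 0\<close> g sep] \<open>finite P\<close>
    unfolding r_def by (intro sum_emeasure) auto
  also have "\<dots> \<le> emeasure lborel (eps_nbhd B r)"
    using g unfolding eps_nbhd_def by (intro emeasure_mono) (auto intro: borel_open)
  finally show ?thesis
    by (simp add: r_def mult_left_mono)
qed

lemma bounded_eps_nbhd:
  assumes "bounded X"
  shows "bounded (eps_nbhd X e)"
proof -
  obtain c r where "X \<subseteq> cball c r"
    using assms bounded_subset_cball by blast
  have "eps_nbhd X e \<subseteq> cball c (r + \<bar>e\<bar>)"
  proof
    fix z assume "z \<in> eps_nbhd X e"
    then obtain x where "x \<in> X" "dist x z < e"
      unfolding eps_nbhd_def by auto
    moreover have "dist c z \<le> dist c x + dist x z"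
      by (rule dist_triangle)
    ultimately show "z \<in> cball c (r + \<bar>e\<bar>)"
      using \<open>X \<subseteq> cball c r\<close> by force
  qed
  then show ?thesis
    using bounded_subset by blast
qed

lemma emeasure_eps_nbhd_eq_measure:
  fixes X :: "'a::euclidean_space set"
  assumes "bounded X"
  shows "emeasure lborel (eps_nbhd X e) = ennreal (measure lborel (eps_nbhd X e))"
  using emeasure_bounded_finite[OF bounded_eps_nbhd[OF assms]]
  by (intro emeasure_eq_ennreal_measure) (simp add: less_top)

text \<open>Real-valued form of the ratio in the Minkowski contents; since \<open>measure\<close> is \<open>0\<close> on sets of
  infinite measure, it agrees with that ratio only for bounded sets.\<close>
definition minkowski_ratio :: "real \<Rightarrow> 'a::euclidean_space set \<Rightarrow> real \<Rightarrow> real" where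
  "minkowski_ratio s X e = measure lborel (eps_nbhd X e) / e powr (real DIM('a) - s)"

lemma minkowski_content_eq_ratio_limits:
  fixes X :: "'a::euclidean_space set"
  assumes "bounded X"
  shows "upper_minkowski_content s X = Limsup (at_right 0) (\<lambda>e. ereal (minkowski_ratio s X e))"
    and "lower_minkowski_content s X = Liminf (at_right 0) (\<lambda>e. ereal (minkowski_ratio s X e))"
proof -
  have "eventually (\<lambda>e. enn2ereal (emeasure lborel (eps_nbhd X e)) / ereal (e powr (real DIM('a) - s))
      = ereal (minkowski_ratio s X e)) (at_right (0::real))"
    using eventually_at_right_less[of 0] by (rule eventually_mono)
      (simp add: minkowski_ratio_def emeasure_eps_nbhd_eq_measure[OF assms] enn2ereal_ennreal)
  then show "upper_minkowski_content s X = Limsup (at_right 0) (\<lambda>e. ereal (minkowski_ratio s X e))"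
    and "lower_minkowski_content s X = Liminf (at_right 0) (\<lambda>e. ereal (minkowski_ratio s X e))"
    unfolding upper_minkowski_content_def lower_minkowski_content_def
    by (simp_all add: Limsup_eq Liminf_eq)
qed

lemma minkowski_ratio_le_rescaled:
  fixes B C :: "'a::euclidean_space set"
  assumes "bounded B" "bounded C" "K \<ge> 0" "M > 0" "e > 0"
    and le: "emeasure lborel (eps_nbhd C e) \<le> ennreal K * emeasure lborel (eps_nbhd B (e / M))"
  shows "minkowski_ratio s C e \<le> K / M powr (real DIM('a) - s) * minkowski_ratio s B (e / M)"
proof -
  let ?a = "real DIM('a) - s"
  have "ennreal (measure lborel (eps_nbhd C e)) \<le> ennreal K * ennreal (measure lborel (eps_nbhd B (e / M)))"
    using le by (simp add: emeasure_eps_nbhd_eq_measure assms(1,2))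
  then have "ennreal (measure lborel (eps_nbhd C e)) \<le> ennreal (K * measure lborel (eps_nbhd B (e / M)))"
    using \<open>K \<ge> 0\<close> by (simp add: ennreal_mult)
  then have "measure lborel (eps_nbhd C e) \<le> K * measure lborel (eps_nbhd B (e / M))"
    using \<open>K \<ge> 0\<close> by (simp add: ennreal_le_iff)
  then have "minkowski_ratio s C e \<le> K * measure lborel (eps_nbhd B (e / M)) / e powr ?a"
    unfolding minkowski_ratio_def by (simp add: divide_right_mono)
  also have "\<dots> = K / M powr ?a * minkowski_ratio s B (e / M)"
    using \<open>e > 0\<close> \<open>M > 0\<close> by (simp add: minkowski_ratio_def powr_divide field_simps)
  finally show ?thesis .
qed

lemma Limsup_Liminf_at_right_0_rescale:
  fixes g :: "real \<Rightarrow> 'a::complete_lattice"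
  assumes "M > 0"
  shows "Limsup (at_right 0) (\<lambda>e. g (e / M)) = Limsup (at_right 0) g"
    and "Liminf (at_right 0) (\<lambda>e. g (e / M)) = Liminf (at_right 0) g"
proof -
  have "inj (\<lambda>e::real. e / M)"
    using assms by (auto intro: injI)
  moreover have "filtermap (\<lambda>e. e / M) (at_right 0) = at_right (0::real)"
    using filtermap_times_pos_at_right[of "inverse M" 0] assms
    by (simp add: divide_inverse_commute)
  ultimately show "Limsup (at_right 0) (\<lambda>e. g (e / M)) = Limsup (at_right 0) g"
    and "Liminf (at_right 0) (\<lambda>e. g (e / M)) = Liminf (at_right 0) g"
    using Limsup_filtermap_eq[of "\<lambda>e. e / M" "at_right 0" g] Liminf_filtermap_eq[of "\<lambda>e. e / M" "at_right 0" g]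
    by simp_all
qed

lemma minkowski_content_zero_transfer:
  fixes B C :: "'a::euclidean_space set"
  assumes "bounded B" "bounded C" "K \<ge> 0" "M > 0"
    and le: "\<And>e. e > 0 \<Longrightarrow> emeasure lborel (eps_nbhd C e) \<le> ennreal K * emeasure lborel (eps_nbhd B (e / M))"
  shows "upper_minkowski_content s B = 0 \<Longrightarrow> upper_minkowski_content s C = 0"
    and "lower_minkowski_content s B = 0 \<Longrightarrow> lower_minkowski_content s C = 0"
proof -
  define K' where "K' = K / M powr (real DIM('a) - s)"
  have "K' \<ge> 0"
    using assms by (simp add: K'_def)
  have le_ev: "eventually (\<lambda>e. ereal (minkowski_ratio s C e) \<le> ereal K' * ereal (minkowski_ratio s B (e / M)))
      (at_right 0)"
    using eventually_at_right_less[of 0]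
    by (rule eventually_mono) (use minkowski_ratio_le_rescaled[OF assms(1-4) _ le] in \<open>simp add: K'_def\<close>)
  have nonneg: "eventually (\<lambda>e. 0 \<le> ereal (minkowski_ratio s C e)) (at_right 0)"
    by (simp add: minkowski_ratio_def)
  show "upper_minkowski_content s C = 0" if "upper_minkowski_content s B = 0"
  proof -
    have "Limsup (at_right 0) (\<lambda>e. ereal (minkowski_ratio s C e))
        \<le> Limsup (at_right 0) (\<lambda>e. ereal K' * ereal (minkowski_ratio s B (e / M)))"
      by (rule Limsup_mono[OF le_ev])
    also have "\<dots> = ereal K' * Limsup (at_right 0) (\<lambda>e. ereal (minkowski_ratio s B (e / M)))"
      using \<open>K' \<ge> 0\<close> by (intro Limsup_ereal_mult_left) simp_all
    also have "\<dots> = 0"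
      using that Limsup_Liminf_at_right_0_rescale(1)[OF \<open>M > 0\<close>, of "\<lambda>e. ereal (minkowski_ratio s B e)"]
      by (simp add: minkowski_content_eq_ratio_limits[OF \<open>bounded B\<close>])
    finally have "Limsup (at_right 0) (\<lambda>e. ereal (minkowski_ratio s C e)) \<le> 0" .
    moreover have "0 \<le> Limsup (at_right 0) (\<lambda>e. ereal (minkowski_ratio s C e))"
      using order_trans[OF Liminf_bounded[OF nonneg] Liminf_le_Limsup] by simp
    ultimately show ?thesis
      by (simp add: minkowski_content_eq_ratio_limits[OF \<open>bounded C\<close>])
  qed
  show "lower_minkowski_content s C = 0" if "lower_minkowski_content s B = 0"
  proof -
    have "Liminf (at_right 0) (\<lambda>e. ereal (minkowski_ratio s C e))
        \<le> Liminf (at_right 0) (\<lambda>e. ereal K' * ereal (minkowski_ratio s B (e / M)))"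
      by (rule Liminf_mono[OF le_ev])
    also have "\<dots> = ereal K' * Liminf (at_right 0) (\<lambda>e. ereal (minkowski_ratio s B (e / M)))"
      using \<open>K' \<ge> 0\<close> by (intro Liminf_ereal_mult_left) simp_all
    also have "\<dots> = 0"
      using that Limsup_Liminf_at_right_0_rescale(2)[OF \<open>M > 0\<close>, of "\<lambda>e. ereal (minkowski_ratio s B e)"]
      by (simp add: minkowski_content_eq_ratio_limits[OF \<open>bounded B\<close>])
    finally have "Liminf (at_right 0) (\<lambda>e. ereal (minkowski_ratio s C e)) \<le> 0" .
    with Liminf_bounded[OF nonneg] show ?thesis
      by (simp add: minkowski_content_eq_ratio_limits[OF \<open>bounded C\<close>])
  qed
qed

lemma minkowski_content_zero_lipschitz_image:
  fixes f :: "'a::euclidean_space \<Rightarrow> 'a"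
  assumes "L-lipschitz_on B f" "L > 0" "bounded B"
  shows "upper_minkowski_content s B = 0 \<Longrightarrow> upper_minkowski_content s (f ` B) = 0"
    and "lower_minkowski_content s B = 0 \<Longrightarrow> lower_minkowski_content s (f ` B) = 0"
  using minkowski_content_zero_transfer[OF \<open>bounded B\<close> bounded_lipschitz_image[OF assms(1,3)], of "(4 * L) ^ DIM('a)" "2 * L"]
    emeasure_eps_nbhd_lipschitz_image_le[OF assms(1,2) bounded_lipschitz_image[OF assms(1,3)]] \<open>L > 0\<close>
  by simp_all

lemma box_dim_bi_lipschitz_image:
  fixes f :: "'a::euclidean_space \<Rightarrow> 'a"
  assumes "bi_lipschitz_on B f" "bounded B"
  shows "upper_box_dim (f ` B) = upper_box_dim B" and "lower_box_dim (f ` B) = lower_box_dim B"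
proof -
  obtain c1 c2 where "c1 > 0" "c2 > 0"
    and bi: "\<And>a b. a \<in> B \<Longrightarrow> b \<in> B \<Longrightarrow> c1 * dist a b \<le> dist (f a) (f b) \<and> dist (f a) (f b) \<le> c2 * dist a b"
    using assms(1) unfolding bi_lipschitz_on_def by blast
  have lip_f: "c2-lipschitz_on B f"
    using bi \<open>c2 > 0\<close> by (intro lipschitz_onI) auto
  have "inj_on f B"
    using bi \<open>c1 > 0\<close> by (intro inj_onI) (metis dist_eq_0_iff mult_le_0_iff not_le order.refl zero_less_dist_iff)
  define g where "g = the_inv_into B f"
  have g_f: "g (f a) = a" if "a \<in> B" for a
    using the_inv_into_f_f[OF \<open>inj_on f B\<close> that] by (simp add: g_def)
  have lip_g: "(1 / c1)-lipschitz_on (f ` B) g"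
  proof (rule lipschitz_onI)
    fix u v assume "u \<in> f ` B" "v \<in> f ` B"
    then obtain a b where "a \<in> B" "b \<in> B" "u = f a" "v = f b"
      by blast
    then show "dist (g u) (g v) \<le> 1 / c1 * dist u v"
      using bi[of a b] g_f \<open>c1 > 0\<close> by (simp add: field_simps)
  qed (use \<open>c1 > 0\<close> in simp)
  have "g ` f ` B = B"
    using g_f by (force simp: image_image)
  then have zero_iff: "upper_minkowski_content s (f ` B) = 0 \<longleftrightarrow> upper_minkowski_content s B = 0"
    "lower_minkowski_content s (f ` B) = 0 \<longleftrightarrow> lower_minkowski_content s B = 0" for s
    using minkowski_content_zero_lipschitz_image[OF lip_f _ \<open>bounded B\<close>, of s]
      minkowski_content_zero_lipschitz_image[OF lip_g _ bounded_lipschitz_image[OF lip_f \<open>bounded B\<close>], of s]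
      \<open>c1 > 0\<close> \<open>c2 > 0\<close>
    by auto
  show "upper_box_dim (f ` B) = upper_box_dim B" "lower_box_dim (f ` B) = lower_box_dim B"
    unfolding upper_box_dim_def lower_box_dim_def zero_iff by simp_all
qed

theorem proposition2p4:
  fixes A :: "'a::euclidean_space set" and w :: 'a
  assumes "0 \<notin> closure A" and "w \<notin> closure A"
  shows "(inversion w \<circ> inversion 0) ` (inversion 0 ` A) = inversion w ` A
    \<and> bi_lipschitz_on (inversion 0 ` A) (inversion w \<circ> inversion 0)
    \<and> upper_box_dim (inversion 0 ` A) = upper_box_dim (inversion w ` A)
    \<and> lower_box_dim (inversion 0 ` A) = lower_box_dim (inversion w ` A)"
proof -
  obtain d0 dw where "d0 > 0" "dw > 0"
    and sep: "\<And>x. x \<in> closure A \<Longrightarrow> d0 \<le> dist 0 x \<and> dw \<le> dist w x"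
    using separate_point_closed[OF closed_closure assms(1)] separate_point_closed[OF closed_closure assms(2)]
    by metis
  define d where "d = min d0 dw"
  have "d > 0"
    using \<open>d0 > 0\<close> \<open>dw > 0\<close> by (simp add: d_def)
  have away: "\<And>x. x \<in> A \<Longrightarrow> d \<le> norm x \<and> d \<le> norm (x - w)"
    using sep closure_subset unfolding d_def by (fastforce simp: dist_norm norm_minus_commute)
  have image: "(inversion w \<circ> inversion 0) ` (inversion 0 ` A) = inversion w ` A"
    by (simp add: image_image)
  have bi_lip: "bi_lipschitz_on (inversion 0 ` A) (inversion w \<circ> inversion 0)"
    using \<open>d > 0\<close> away by (rule bi_lipschitz_on_inversion_change_centre)
  have "inversion 0 ` A \<subseteq> cball 0 (1 / d)"
    using away \<open>d > 0\<close> by (auto simp: norm_inversion intro!: frac_le)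
  then have "bounded (inversion 0 ` A)"
    by (rule bounded_subset[OF bounded_cball])
  with image bi_lip box_dim_bi_lipschitz_image[OF bi_lip] show ?thesis
    by simp
qed

end
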